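(* Let $F:\mathbb{R}^n\to\mathbb{R}$ be a finite PL function and let $M>0$ be such that $F(C)\subseteq[-M,M]$ for every flat cell $C$. Let $n_{\pm}$ be the number of connected components of $\{F\le\pm M\}$ and $n^{\pm}$ the number of connected components of $\{F\ge \pm M\}$. Then (i) $|n_- - n_+|\le \operatorname{rank} H_*(\{F\le M\},\{F\le -M\})$ (the coarse bounded sublevel $H$-complexity), and (ii) $|n^+ - n^-|\le \operatorname{rank} H_*(\{F\ge -M\},\{F\ge M\})$ (the coarse bounded superlevel $H$-complexity).
   Context: A finite PL function $F:\mathbb{R}^n\to\mathbb{R}$ is a continuous function that is affine-linear on each cell of some finite polyhedral complex $\mathcal{C}$ (finite collection of polyhedral sets, closed under taking faces, pairwise intersecting in common faces) with $|\mathcal{C}|=\mathbb{R}^n$; a cell is flat if $F$ is constant on it (all $0$-cells are flat). $\{F\le t\}=F^{-1}((-\infty,t])$, $\{F\ge t\}=F^{-1}([t,\infty))$. $H_*$ denotes singular homology with $\mathbb{Z}$ coefficients and $\operatorname{rank}H_*$ the sum over all degrees of the ranks. *)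

theory Defs
  imports "HOL-Analysis.Analysis" "HOL-Homology.Homology" "HOL-Library.Extended_Nat"
begin

definition polyhedral_complex :: "'a::euclidean_space set set \<Rightarrow> bool" where
  "polyhedral_complex \<C> \<longleftrightarrow>
     finite \<C> \<and>
     (\<forall>C\<in>\<C>. polyhedron C) \<and>
     (\<forall>C\<in>\<C>. \<forall>D. D face_of C \<longrightarrow> D \<in> \<C>) \<and>
     (\<forall>C\<in>\<C>. \<forall>D\<in>\<C>. (C \<inter> D) face_of C \<and> (C \<inter> D) face_of D)"

definition PL_wrt :: "('a::euclidean_space \<Rightarrow> real) \<Rightarrow> 'a set set \<Rightarrow> bool" where
  "PL_wrt F \<C> \<longleftrightarrow>
     polyhedral_complex \<C> \<and> \<Union>\<C> = UNIV \<and> continuous_on UNIV F \<and>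
     (\<forall>C\<in>\<C>. \<exists>a b. \<forall>x\<in>C. F x = a \<bullet> x + b)"

definition flat_cell :: "('a \<Rightarrow> real) \<Rightarrow> 'a set \<Rightarrow> bool" where
  "flat_cell F C \<longleftrightarrow> (\<exists>c. \<forall>x\<in>C. F x = c)"

definition Z_lin_indep :: "('g, 'b) monoid_scheme \<Rightarrow> 'g set \<Rightarrow> bool" where
  "Z_lin_indep G S \<longleftrightarrow> S \<subseteq> carrier G \<and> finite S \<and>
     (\<forall>c :: 'g \<Rightarrow> int. finprod G (\<lambda>x. x [^]\<^bsub>G\<^esub> c x) S = \<one>\<^bsub>G\<^esub> \<longrightarrow> (\<forall>x\<in>S. c x = 0))"

definition group_rank :: "('g, 'b) monoid_scheme \<Rightarrow> enat" where
  "group_rank G = Sup {enat (card S) | S. Z_lin_indep G S}"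

definition total_rel_hrank :: "'a topology \<Rightarrow> 'a set \<Rightarrow> enat" where
  "total_rel_hrank X S = (SUP k. \<Sum>p<k. group_rank (relative_homology_group (int p) X S))"

definition sublevel :: "('a \<Rightarrow> real) \<Rightarrow> real \<Rightarrow> 'a set" where
  "sublevel F t = {x. F x \<le> t}"

definition superlevel :: "('a \<Rightarrow> real) \<Rightarrow> real \<Rightarrow> 'a set" where
  "superlevel F t = {x. F x \<ge> t}"

end

theory Submission
  imports Defs
begin

text \<open>Both level sets are finite unions of closed convex sets (cells cut by a half-space), so their
  connected components are path components and there are finitely many. For a pair \<open>A \<subseteq> U\<close>
  the exact sequence \<open>H\<^sub>1(U,A) \<rightarrow> H\<^sub>0(A) \<rightarrow> H\<^sub>0(U) \<rightarrow> H\<^sub>0(U,A) \<rightarrow> 0\<close> bounds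
  \<open>n(U) - n(A)\<close> by the rank of \<open>H\<^sub>0(U,A)\<close> and \<open>n(A) - n(U)\<close> by the rank of
  \<open>H\<^sub>1(U,A)\<close>. Rather than using exactness, independent classes are exhibited directly: a
  point in each component of \<open>U\<close> missing \<open>A\<close> gives independent classes in \<open>H\<^sub>0(U,A)\<close>;
  and a path in \<open>U\<close> from each surplus component of \<open>A\<close> to a chosen component of \<open>A\<close>
  in the same component of \<open>U\<close> gives relative 1-cycles whose boundaries, read in
  \<open>H\<^sub>0(A)\<close>, are independent.\<close>

definition frag_independent :: "'i set \<Rightarrow> ('i \<Rightarrow> 'b \<Rightarrow>\<^sub>0 int) \<Rightarrow> bool" where
  "frag_independent I v \<longleftrightarrow> (\<forall>c. (\<Sum>i\<in>I. frag_cmul (c i) (v i)) = 0 \<longrightarrow> (\<forall>i\<in>I. c i = 0))"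

lemma frag_independent_imp_inj_on:
  assumes "finite I" and "frag_independent I v"
  shows "inj_on v I"
proof (rule inj_onI, rule ccontr)
  fix i j assume ij: "i \<in> I" "j \<in> I" "v i = v j" "i \<noteq> j"
  define c where "c k = (if k = i then 1 else if k = j then -1 else 0 :: int)" for k
  have "frag_cmul (c k) (v k) = (if k = i then v i else 0) - (if k = j then v j else 0)" for k
    using ij by (auto simp: c_def)
  then have "(\<Sum>k\<in>I. frag_cmul (c k) (v k)) = 0"
    using ij assms(1) by (simp add: sum_subtractf)
  then have "c i = 0"
    using assms(2) ij by (auto simp: frag_independent_def)
  then show False by (simp add: c_def)
qed

lemma hom_finprod:
  assumes "comm_group G" "comm_group H" "h \<in> hom G H"
    and "finite E" "f \<in> E \<rightarrow> carrier G"
  shows "h (finprod G f E) = finprod H (\<lambda>x. h (f x)) E"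
proof -
  interpret G: comm_group G by (rule assms(1))
  interpret H: comm_group H by (rule assms(2))
  interpret group_hom G H h
    using assms(3) by (simp add: group_hom_def group_hom_axioms_def)
  show ?thesis
    using assms(4,5)
  proof (induction E rule: finite_induct)
    case (insert x E)
    then have "h (finprod G f (insert x E)) = h (f x) \<otimes>\<^bsub>H\<^esub> h (finprod G f E)"
      by simp
    also have "\<dots> = finprod H (\<lambda>x. h (f x)) (insert x E)"
      using insert by (simp add: Pi_def)
    finally show ?case .
  qed simp
qed

lemma finprod_free_Abelian_group:
  assumes "finite E" "\<And>x. x \<in> E \<Longrightarrow> Poly_Mapping.keys (f x) \<subseteq> S"
  shows "finprod (free_Abelian_group S) f E = sum f E"
  using assms
proof (induction E rule: finite_induct)
  case (insert x E)
  interpret comm_group "free_Abelian_group S" by (rule abelian_free_Abelian_group)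
  show ?case using insert by (subst finprod_insert) (auto simp: Pi_def)
qed (simp add: finprod_def)

lemma Z_lin_indep_if_hom_independent:
  assumes G: "comm_group G" and h: "h \<in> hom G (free_Abelian_group UNIV)"
    and E: "E \<subseteq> carrier G" "finite E" and ind: "frag_independent E h"
  shows "Z_lin_indep G E"
  unfolding Z_lin_indep_def
proof (intro conjI allI impI E)
  let ?H = "free_Abelian_group UNIV"
  interpret G: comm_group G by (rule G)
  interpret group_hom G ?H h
    using h by (simp add: group_hom_def group_hom_axioms_def)
  fix c :: "_ \<Rightarrow> int"
  assume "finprod G (\<lambda>x. x [^]\<^bsub>G\<^esub> c x) E = \<one>\<^bsub>G\<^esub>"
  then have "0 = h (finprod G (\<lambda>x. x [^]\<^bsub>G\<^esub> c x) E)" by simp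
  also have "\<dots> = finprod ?H (\<lambda>x. h (x [^]\<^bsub>G\<^esub> c x)) E"
    using E by (simp add: hom_finprod[OF G abelian_free_Abelian_group h] Pi_def subset_iff)
  also have "\<dots> = finprod ?H (\<lambda>x. frag_cmul (c x) (h x)) E"
  proof (rule comm_monoid.finprod_cong')
    show "comm_monoid ?H"
      using abelian_free_Abelian_group comm_group.axioms(1) by blast
    show "h (x [^]\<^bsub>G\<^esub> c x) = frag_cmul (c x) (h x)" if "x \<in> E" for x
      using hom_int_pow that E by auto
  qed auto
  also have "\<dots> = (\<Sum>x\<in>E. frag_cmul (c x) (h x))"
    using E by (intro finprod_free_Abelian_group) auto
  finally show "\<forall>x\<in>E. c x = 0"
    using ind by (auto simp: frag_independent_def)
qed

lemma card_le_group_rank: "Z_lin_indep G S \<Longrightarrow> enat (card S) \<le> group_rank G"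
  unfolding group_rank_def by (blast intro: Sup_upper)

lemma frag_independent_image:
  assumes "frag_independent I w" "inj_on g I" "\<And>i. i \<in> I \<Longrightarrow> v (g i) = w i"
  shows "frag_independent (g ` I) v"
  unfolding frag_independent_def
proof (intro allI impI)
  fix c assume "(\<Sum>x\<in>g ` I. frag_cmul (c x) (v x)) = 0"
  then have "(\<Sum>i\<in>I. frag_cmul (c (g i)) (w i)) = 0"
    using assms(2,3) by (simp add: sum.reindex)
  then show "\<forall>x\<in>g ` I. c x = 0"
    using assms(1) by (auto simp: frag_independent_def)
qed

lemma relative_homology_hom_of_chain_map:
  fixes L :: "'a chain \<Rightarrow> 'b \<Rightarrow>\<^sub>0 int"
  assumes add: "\<And>a b. L (a + b) = L a + L b"
    and kill: "\<And>c. singular_relboundary p X S c \<Longrightarrow> L c = 0"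
  obtains h where "h \<in> hom (relative_homology_group (int p) X S) (free_Abelian_group UNIV)"
    and "\<And>c. singular_relcycle p X S c \<Longrightarrow> h (homologous_rel_set p X S c) = L c"
proof
  let ?G = "relative_homology_group (int p) X S"
  define h where "h T = L (SOME r. r \<in> T)" for T
  have L_diff: "L (a - b) = L a - L b" for a b
    by (metis add eq_diff_eq)
  have h_eq: "h T = L t" if T: "T \<in> carrier ?G" and "t \<in> T" for T t
  proof -
    obtain c where c: "T = homologous_rel_set p X S c"
      using T by (auto simp: carrier_relative_homology_group)
    have "L r = L c" if "r \<in> T" for r
      using kill[of "c - r"] that c by (simp add: homologous_rel_def L_diff)
    moreover have "(SOME r. r \<in> T) \<in> T"
      using \<open>t \<in> T\<close> by (rule someI)
    ultimately show ?thesis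
      using \<open>t \<in> T\<close> by (simp add: h_def)
  qed
  show "h (homologous_rel_set p X S c) = L c" if "singular_relcycle p X S c" for c
    using that by (intro h_eq) (auto simp: carrier_relative_homology_group)
  show "h \<in> hom ?G (free_Abelian_group UNIV)"
  proof (rule homI)
    fix x y assume xy: "x \<in> carrier ?G" "y \<in> carrier ?G"
    then obtain a b where "x = homologous_rel_set p X S a" "y = homologous_rel_set p X S b"
      by (auto simp: carrier_relative_homology_group)
    then have "a \<in> x" "b \<in> y"
      by simp_all
    moreover have "a + b \<in> x \<otimes>\<^bsub>?G\<^esub> y"
      using \<open>a \<in> x\<close> \<open>b \<in> y\<close> by (auto simp: mult_relative_homology_group)
    moreover have "x \<otimes>\<^bsub>?G\<^esub> y \<in> carrier ?G"
      using xy by (simp add: group.is_monoid monoid.m_closed)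
    ultimately show "h (x \<otimes>\<^bsub>?G\<^esub> y) = h x \<otimes>\<^bsub>free_Abelian_group UNIV\<^esub> h y"
      using xy by (simp add: h_eq add)
  qed simp
qed

lemma card_le_rank_relative_homology:
  fixes L :: "'a chain \<Rightarrow> 'b \<Rightarrow>\<^sub>0 int" and \<sigma> :: "'i \<Rightarrow> 'a chain"
  assumes add: "\<And>a b. L (a + b) = L a + L b"
    and kill: "\<And>c. singular_relboundary p X S c \<Longrightarrow> L c = 0"
    and I: "finite I" "\<And>i. i \<in> I \<Longrightarrow> singular_relcycle p X S (\<sigma> i)"
    and ind: "frag_independent I (\<lambda>i. L (\<sigma> i))"
  shows "enat (card I) \<le> group_rank (relative_homology_group (int p) X S)"
proof -
  let ?cl = "\<lambda>i. homologous_rel_set p X S (\<sigma> i)"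
  obtain h where h: "h \<in> hom (relative_homology_group (int p) X S) (free_Abelian_group UNIV)"
    and h_class: "\<And>c. singular_relcycle p X S c \<Longrightarrow> h (homologous_rel_set p X S c) = L c"
    using relative_homology_hom_of_chain_map[OF add kill] by blast
  have h_cl: "h (?cl i) = L (\<sigma> i)" if "i \<in> I" for i
    using I(2)[OF that] by (rule h_class)
  have "inj_on (\<lambda>i. L (\<sigma> i)) I"
    using I(1) ind by (rule frag_independent_imp_inj_on)
  then have "inj_on (h \<circ> ?cl) I"
    by (simp add: inj_on_def h_cl)
  then have inj: "inj_on ?cl I"
    by (rule inj_on_imageI2)
  have "Z_lin_indep (relative_homology_group (int p) X S) (?cl ` I)"
  proof (rule Z_lin_indep_if_hom_independent[OF _ h])
    show "?cl ` I \<subseteq> carrier (relative_homology_group (int p) X S)"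
      using I(2) by (auto simp: carrier_relative_homology_group)
    show "frag_independent (?cl ` I) h"
      using ind inj h_cl by (rule frag_independent_image)
  qed (use I(1) in auto)
  then show ?thesis
    using card_image[OF inj] card_le_group_rank by metis
qed

definition simplex_vertex :: "nat \<Rightarrow> real" where
  "simplex_vertex = (\<lambda>j. if j = 0 then 1 else 0)"

abbreviation point_simplex :: "'a \<Rightarrow> (nat \<Rightarrow> real) \<Rightarrow> 'a" where
  "point_simplex x \<equiv> restrict (\<lambda>_. x) (standard_simplex 0)"

lemma simplex_vertex_in_standard_simplex: "simplex_vertex \<in> standard_simplex 0"
  by (simp add: simplex_vertex_def standard_simplex_0)

lemma singular_simplex_point_simplex:
  "x \<in> topspace X \<Longrightarrow> singular_simplex 0 X (point_simplex x)"
  by (simp add: singular_simplex_def)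

lemma singular_simplex_0_vertex:
  "singular_simplex 0 X \<sigma> \<Longrightarrow> \<sigma> simplex_vertex \<in> topspace X"
  using simplex_vertex_in_standard_simplex by (auto simp: singular_simplex_def continuous_map_def)

lemma path_component_of_set_eq:
  "C \<in> path_components_of X \<Longrightarrow> x \<in> C \<Longrightarrow> path_component_of_set X x = C"
  unfolding path_components_of_def by (auto simp: path_component_of_equiv)

lemma some_in_path_components_of:
  assumes "C \<in> path_components_of X"
  shows "(SOME x. x \<in> C) \<in> C" and "(SOME x. x \<in> C) \<in> topspace X"
proof -
  show "(SOME x. x \<in> C) \<in> C"
    using nonempty_path_components_of[OF assms] by (auto simp: some_in_eq)
  then show "(SOME x. x \<in> C) \<in> topspace X"
    using path_components_of_subset[OF assms] by blast
qed

lemma frag_extend_path_component_chain_boundary: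
  assumes "singular_chain (Suc 0) X d"
  shows "frag_extend (\<lambda>\<sigma>. g (path_component_of_set X (\<sigma> simplex_vertex))) (chain_boundary (Suc 0) d) = 0"
  using assms unfolding singular_chain_def
proof (induction d rule: frag_induction)
  case (one \<tau>)
  then have "continuous_map (subtopology (powertop_real UNIV) (standard_simplex (Suc 0))) X \<tau>"
    by (simp add: singular_simplex_def)
  then have pc: "path_connectedin X (\<tau> ` standard_simplex (Suc 0))"
    by (simp add: path_connectedin_subtopology path_connectedin_standard_simplex
        path_connectedin_continuous_map_image)
  have face: "singular_face (Suc 0) k \<tau> simplex_vertex \<in> \<tau> ` standard_simplex (Suc 0)"
    if "k \<le> Suc 0" for k
    using simplical_face_in_standard_simplex[of "Suc 0" k] that simplex_vertex_in_standard_simplex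
    by (simp add: singular_face_def)
  have "path_component_of X (singular_face (Suc 0) 0 \<tau> simplex_vertex)
                            (singular_face (Suc 0) (Suc 0) \<tau> simplex_vertex)"
    using path_component_of_maximal[OF pc face[of 0]] face[of "Suc 0"] by blast
  then have "path_component_of_set X (singular_face (Suc 0) 0 \<tau> simplex_vertex)
           = path_component_of_set X (singular_face (Suc 0) (Suc 0) \<tau> simplex_vertex)"
    by (simp add: path_component_of_equiv)
  then show ?case by (simp add: chain_boundary_of frag_extend_diff)
qed (simp_all add: chain_boundary_diff frag_extend_diff)

lemma chain_boundary_eq_point_simplex_diff:
  assumes "path_component_of X u v"
  obtains d where "singular_chain (Suc 0) X d"
    and "chain_boundary (Suc 0) d = frag_of (point_simplex u) - frag_of (point_simplex v)"
proof -
  let ?K = "path_component_of_set X u"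
  have uv: "u \<in> topspace X" "v \<in> topspace X"
    using path_component_of_equiv[THEN iffD1, OF assms] by simp_all
  have uvK: "u \<in> ?K" "v \<in> ?K"
    using uv(1) assms by (simp_all add: path_component_of_refl)
  have "path_connected_space (subtopology X ?K)"
    using path_connectedin_path_component_of[of X u] by (simp add: path_connectedin_def)
  moreover have "singular_simplex 0 (subtopology X ?K) (point_simplex w)" if "w \<in> {u, v}" for w
    using that uv uvK by (intro singular_simplex_point_simplex) auto
  ultimately have "homologous_rel 0 (subtopology X ?K) {} (frag_of (point_simplex u)) (frag_of (point_simplex v))"
    by (simp add: iso_integer_zeroth_homology_group_aux)
  then have "singular_relboundary 0 (subtopology X ?K) {} (frag_of (point_simplex u) - frag_of (point_simplex v))"
    by (simp add: homologous_rel_def)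
  then obtain d e where d: "singular_chain (Suc 0) (subtopology X ?K) d"
      and e: "singular_chain 0 (subtopology (subtopology X ?K) {}) e"
      and bd: "chain_boundary (Suc 0) d = (frag_of (point_simplex u) - frag_of (point_simplex v)) + e"
    using singular_relboundary_alt by blast
  have "e = 0"
    using e by (simp add: singular_chain_empty)
  moreover have "singular_chain (Suc 0) X d"
    using d singular_chain_subtopology by blast
  ultimately show thesis
    using bd that by simp
qed

lemma frag_independent_frag_of_minus:
  assumes "finite I" "\<And>i. i \<in> I \<Longrightarrow> v i = frag_of i - w i"
    and "\<And>i. i \<in> I \<Longrightarrow> Poly_Mapping.keys (w i) \<inter> I = {}"
  shows "frag_independent I v"
  unfolding frag_independent_def
proof (intro allI impI ballI)
  fix c i0 assume sum0: "(\<Sum>i\<in>I. frag_cmul (c i) (v i)) = 0" and "i0 \<in> I"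
  have "Poly_Mapping.lookup (frag_cmul (c i) (v i)) i0 = (if i = i0 then c i else 0)"
    if "i \<in> I" for i
    using assms(2,3)[OF that] \<open>i0 \<in> I\<close> by (auto simp: lookup_minus in_keys_iff)
  then have "Poly_Mapping.lookup (\<Sum>i\<in>I. frag_cmul (c i) (v i)) i0 = c i0"
    using assms(1) \<open>i0 \<in> I\<close> by (simp add: lookup_sum)
  then show "c i0 = 0"
    using sum0 by simp
qed

lemma path_component_of_path_components_of_subtopology:
  assumes "B \<in> path_components_of (subtopology X A)" "b \<in> B" "b' \<in> B"
  shows "path_component_of X b b'"
proof -
  have "path_component_of_set (subtopology X A) b = B"
    using assms(1,2) by (rule path_component_of_set_eq)
  then have "path_component_of (subtopology X A) b b'"
    using assms(3) by auto
  then show ?thesis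
    using path_component_of_mono[of X A b b' UNIV] by simp
qed

lemma card_path_components_le_card_disjoint_plus:
  assumes "finite (path_components_of (subtopology X A))"
  shows "card (path_components_of X)
         \<le> card {C \<in> path_components_of X. C \<inter> A = {}} + card (path_components_of (subtopology X A))"
proof -
  let ?PX = "path_components_of X" and ?PA = "path_components_of (subtopology X A)"
  let ?D = "{C \<in> ?PX. C \<inter> A = {}}"
  define \<kappa> where "\<kappa> B = path_component_of_set X (SOME b. b \<in> B)" for B
  have "?PX - ?D \<subseteq> \<kappa> ` ?PA"
  proof
    fix C assume "C \<in> ?PX - ?D"
    then obtain a where C: "C \<in> ?PX" "a \<in> C" "a \<in> A" by blast
    then have a: "a \<in> topspace (subtopology X A)"
      using path_components_of_subset by fastforce
    let ?B = "path_component_of_set (subtopology X A) a"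
    have B: "?B \<in> ?PA" "a \<in> ?B"
      using a by (simp_all add: path_component_in_path_components_of path_component_of_refl)
    then have "path_component_of X a (SOME b. b \<in> ?B)"
      by (intro path_component_of_path_components_of_subtopology[OF B(1) B(2)] someI)
    then have "\<kappa> ?B = path_component_of_set X a"
      by (simp add: \<kappa>_def path_component_of_equiv)
    also have "\<dots> = C"
      using C by (simp add: path_component_of_set_eq)
    finally show "C \<in> \<kappa> ` ?PA"
      using B(1) by blast
  qed
  then have "card (?PX - ?D) \<le> card ?PA"
    using assms by (meson card_image_le card_mono finite_imageI order_trans)
  moreover have "card ?PX \<le> card ?D + card (?PX - ?D)"
    using card_Un_le[of ?D "?PX - ?D"] by (simp add: Un_absorb1)
  ultimately show ?thesis by linarith
qed

lemma card_disjoint_path_components_le_rank_homology_0: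
  assumes "finite (path_components_of X)"
  shows "enat (card {C \<in> path_components_of X. C \<inter> A = {}})
         \<le> group_rank (relative_homology_group 0 X A)"
proof -
  let ?D = "{C \<in> path_components_of X. C \<inter> A = {}}"
  define \<sigma> where "\<sigma> C = frag_of (point_simplex (SOME x. x \<in> C))" for C :: "'a set"
  \<comment> \<open>\<open>L\<close> projects \<open>H\<^sub>0(X,A)\<close> onto the free group on the path components of \<open>X\<close> missing \<open>A\<close>.\<close>
  define g where "g C = (if C \<inter> A = {} then frag_of C else 0)" for C :: "'a set"
  define L where "L = frag_extend (\<lambda>\<tau>. g (path_component_of_set X (\<tau> simplex_vertex)))"
  have pt: "(SOME x. x \<in> C) \<in> C" "(SOME x. x \<in> C) \<in> topspace X" if "C \<in> ?D" for C
    using that some_in_path_components_of by auto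
  have "enat (card ?D) \<le> group_rank (relative_homology_group (int 0) X A)"
  proof (rule card_le_rank_relative_homology[where L = L and \<sigma> = \<sigma>])
    show "L (a + b) = L a + L b" for a b
      by (simp add: L_def frag_extend_add)
    show "finite ?D"
      using assms by simp
    show "singular_relcycle 0 X A (\<sigma> C)" if "C \<in> ?D" for C
      using pt[OF that] by (simp add: \<sigma>_def singular_relcycle singular_chain_of chain_boundary_def
          singular_simplex_point_simplex)
    show "L c = 0" if rb: "singular_relboundary 0 X A c" for c
    proof -
      obtain d e where d: "singular_chain (Suc 0) X d" and e: "singular_chain 0 (subtopology X A) e"
        and "chain_boundary (Suc 0) d = c + e"
        using rb unfolding singular_relboundary_alt by blast
      then have "c = chain_boundary (Suc 0) d - e"
        by simp
      moreover have "L (chain_boundary (Suc 0) d) = 0"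
        unfolding L_def by (rule frag_extend_path_component_chain_boundary[OF d])
      moreover have "L e = 0"
        unfolding L_def
      proof (rule frag_extend_eq_0)
        fix \<tau> assume "\<tau> \<in> Poly_Mapping.keys e"
        then have "\<tau> simplex_vertex \<in> topspace X \<inter> A"
          using e singular_simplex_0_vertex by (fastforce simp: singular_chain_def)
        then have "\<tau> simplex_vertex \<in> path_component_of_set X (\<tau> simplex_vertex) \<inter> A"
          by (simp add: path_component_of_refl)
        then show "g (path_component_of_set X (\<tau> simplex_vertex)) = 0"
          by (auto simp: g_def)
      qed
      ultimately show ?thesis
        by (simp add: L_def frag_extend_diff)
    qed
    have "L (\<sigma> C) = frag_of C - 0" if "C \<in> ?D" for C
    proof -
      have "path_component_of_set X (SOME x. x \<in> C) = C"
        using that pt(1)[OF that] by (simp add: path_component_of_set_eq)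
      then show ?thesis
        using that by (simp add: L_def \<sigma>_def g_def simplex_vertex_in_standard_simplex)
    qed
    then show "frag_independent ?D (\<lambda>C. L (\<sigma> C))"
      using assms by (intro frag_independent_frag_of_minus[where w = "\<lambda>_. 0"]) auto
  qed
  then show ?thesis by simp
qed

text \<open>Every path component of \<open>X\<close> met by \<open>A\<close> gets one representative component of \<open>A\<close>
  (via \<open>inv_into\<close>); the other components of \<open>A\<close> form \<open>I\<close>, and \<open>R\<close> sends each to its representative.\<close>
lemma obtain_redundant_path_components_of_subtopology:
  assumes "finite (path_components_of X)" "finite (path_components_of (subtopology X A))"
  obtains I R where "I \<subseteq> path_components_of (subtopology X A)"
    and "card (path_components_of (subtopology X A)) \<le> card I + card (path_components_of X)"
    and "\<And>B. B \<in> I \<Longrightarrow> R B \<in> path_components_of (subtopology X A) - I"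
    and "\<And>B. B \<in> I \<Longrightarrow> \<exists>b\<in>B. \<exists>b'\<in>R B. path_component_of X b b'"
proof -
  let ?PX = "path_components_of X" and ?PA = "path_components_of (subtopology X A)"
  define pt where "pt B = (SOME b. b \<in> B)" for B :: "'a set"
  define \<kappa> where "\<kappa> B = path_component_of_set X (pt B)" for B
  define \<rho> where "\<rho> = inv_into ?PA \<kappa>"
  define I where "I = ?PA - \<rho> ` \<kappa> ` ?PA"
  have pt: "pt B \<in> B" "pt B \<in> topspace X" if "B \<in> ?PA" for B
    using some_in_path_components_of[OF that] by (simp_all add: pt_def)
  have "\<kappa> ` ?PA \<subseteq> ?PX"
    using pt(2) by (auto simp: \<kappa>_def path_component_in_path_components_of)
  then have "card (\<kappa> ` ?PA) \<le> card ?PX"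
    using assms(1) by (rule card_mono[rotated])
  moreover have "card ?PA \<le> card (I \<union> \<rho> ` \<kappa> ` ?PA)"
    using assms(2) by (intro card_mono) (auto simp: I_def)
  moreover have "card (I \<union> \<rho> ` \<kappa> ` ?PA) \<le> card I + card (\<rho> ` \<kappa> ` ?PA)"
    by (rule card_Un_le)
  moreover have "card (\<rho> ` \<kappa> ` ?PA) \<le> card (\<kappa> ` ?PA)"
    using assms(2) by (simp add: card_image_le)
  ultimately have "card ?PA \<le> card I + card ?PX"
    by linarith
  show thesis
  proof (rule that[of I "\<lambda>B. \<rho> (\<kappa> B)"])
    show "I \<subseteq> ?PA"
      by (auto simp: I_def)
    show "card ?PA \<le> card I + card ?PX"
      by fact
    fix B assume "B \<in> I"
    then have B: "B \<in> ?PA"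
      by (simp add: I_def)
    show "\<rho> (\<kappa> B) \<in> ?PA - I"
      using B by (auto simp: I_def \<rho>_def inv_into_into)
    have "\<kappa> (\<rho> (\<kappa> B)) = \<kappa> B"
      using B by (simp add: \<rho>_def f_inv_into_f)
    moreover have "pt (\<rho> (\<kappa> B)) \<in> \<kappa> (\<rho> (\<kappa> B))"
      using pt(2)[of "\<rho> (\<kappa> B)"] B by (simp add: \<kappa>_def \<rho>_def inv_into_into path_component_of_refl)
    ultimately show "\<exists>b\<in>B. \<exists>b'\<in>\<rho> (\<kappa> B). path_component_of X b b'"
      using B pt(1) inv_into_into[of "\<kappa> B" \<kappa> ?PA] by (auto simp: \<kappa>_def \<rho>_def)
  qed
qed

lemma card_redundant_path_components_le_rank_homology_1:
  assumes I: "finite I" "I \<subseteq> path_components_of (subtopology X A)"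
    and R: "\<And>B. B \<in> I \<Longrightarrow> R B \<in> path_components_of (subtopology X A) - I"
    and conn: "\<And>B. B \<in> I \<Longrightarrow> \<exists>b\<in>B. \<exists>b'\<in>R B. path_component_of X b b'"
  shows "enat (card I) \<le> group_rank (relative_homology_group 1 X A)"
proof -
  let ?PA = "path_components_of (subtopology X A)"
  obtain b b' where b: "\<And>B. B \<in> I \<Longrightarrow> b B \<in> B \<and> b' B \<in> R B \<and> path_component_of X (b B) (b' B)"
    using conn by metis
  have "\<exists>d. singular_chain (Suc 0) X d \<and>
          chain_boundary (Suc 0) d = frag_of (point_simplex (b B)) - frag_of (point_simplex (b' B))"
    if "B \<in> I" for B
    using b[OF that] chain_boundary_eq_point_simplex_diff by metis
  then obtain \<sigma> where \<sigma>: "\<And>B. B \<in> I \<Longrightarrow> singular_chain (Suc 0) X (\<sigma> B)"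
    and \<sigma>_bd: "\<And>B. B \<in> I \<Longrightarrow>
      chain_boundary (Suc 0) (\<sigma> B) = frag_of (point_simplex (b B)) - frag_of (point_simplex (b' B))"
    by metis
  have comp: "path_component_of_set (subtopology X A) (b B) = B"
    "path_component_of_set (subtopology X A) (b' B) = R B" if "B \<in> I" for B
  proof -
    show "path_component_of_set (subtopology X A) (b B) = B"
      by (rule path_component_of_set_eq) (use I(2) that b[OF that] in auto)
    show "path_component_of_set (subtopology X A) (b' B) = R B"
      by (rule path_component_of_set_eq) (use R[OF that] b[OF that] in auto)
  qed
  \<comment> \<open>\<open>L\<close> is the connecting map \<open>H\<^sub>1(X,A) \<rightarrow> H\<^sub>0(A)\<close> followed by \<open>H\<^sub>0(A) \<cong> \<int>[\<pi>\<^sub>0(A)]\<close>.\<close>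
  define L where "L c = frag_extend (\<lambda>\<tau>. frag_of (path_component_of_set (subtopology X A) (\<tau> simplex_vertex)))
                          (chain_boundary (Suc 0) c)" for c
  have "enat (card I) \<le> group_rank (relative_homology_group (int (Suc 0)) X A)"
  proof (rule card_le_rank_relative_homology[where L = L and \<sigma> = \<sigma>])
    show "L (a + b) = L a + L b" for a b
      by (simp add: L_def frag_extend_add chain_boundary_add)
    show "finite I" by fact
    show "singular_relcycle (Suc 0) X A (\<sigma> B)" if "B \<in> I" for B
    proof -
      have "b B \<in> topspace (subtopology X A)" "b' B \<in> topspace (subtopology X A)"
        using b[OF that] R[OF that] I(2) that path_components_of_subset by blast+
      then show ?thesis
        using \<sigma>[OF that] \<sigma>_bd[OF that]
        by (simp add: singular_relcycle singular_chain_diff singular_chain_of singular_simplex_point_simplex)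
    qed
    show "L c = 0" if rb: "singular_relboundary (Suc 0) X A c" for c
    proof -
      obtain d e where d: "singular_chain (Suc (Suc 0)) X d"
        and e: "singular_chain (Suc 0) (subtopology X A) e"
        and "chain_boundary (Suc (Suc 0)) d = c + e"
        using rb unfolding singular_relboundary_alt by blast
      then have "chain_boundary (Suc 0) c = - chain_boundary (Suc 0) e"
        using chain_boundary_boundary[OF d] by (simp add: chain_boundary_add eq_neg_iff_add_eq_0)
      then show ?thesis
        using frag_extend_path_component_chain_boundary[OF e, of frag_of]
        by (simp add: L_def frag_extend_minus)
    qed
    have "L (\<sigma> B) = frag_of B - frag_of (R B)" if "B \<in> I" for B
      using comp[OF that] by (simp add: L_def \<sigma>_bd[OF that] frag_extend_diff simplex_vertex_in_standard_simplex)
    then show "frag_independent I (\<lambda>B. L (\<sigma> B))"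
      using I(1) R by (intro frag_independent_frag_of_minus[where w = "\<lambda>B. frag_of (R B)"]) auto
  qed
  then show ?thesis by simp
qed

lemma group_rank_0_plus_1_le_total_rel_hrank:
  "group_rank (relative_homology_group 0 X S) + group_rank (relative_homology_group 1 X S)
   \<le> total_rel_hrank X S"
proof -
  have "(\<Sum>p<2. group_rank (relative_homology_group (int p) X S)) \<le> total_rel_hrank X S"
    unfolding total_rel_hrank_def by (rule SUP_upper) simp
  then show ?thesis
    by (simp add: numeral_2_eq_2)
qed

lemma abs_card_path_components_diff_le_total_rel_hrank:
  assumes "finite (path_components_of X)" "finite (path_components_of (subtopology X A))"
  shows "enat (nat \<bar>int (card (path_components_of (subtopology X A))) - int (card (path_components_of X))\<bar>)
         \<le> total_rel_hrank X A"
proof -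
  let ?nX = "card (path_components_of X)" and ?nA = "card (path_components_of (subtopology X A))"
  let ?D = "{C \<in> path_components_of X. C \<inter> A = {}}"
  have "?nX - ?nA \<le> card ?D"
    using card_path_components_le_card_disjoint_plus[OF assms(2)] by linarith
  then have "enat (?nX - ?nA) \<le> enat (card ?D)"
    by simp
  also have "\<dots> \<le> group_rank (relative_homology_group 0 X A)"
    using assms(1) by (rule card_disjoint_path_components_le_rank_homology_0)
  finally have H0: "enat (?nX - ?nA) \<le> group_rank (relative_homology_group 0 X A)" .
  obtain I R where I: "I \<subseteq> path_components_of (subtopology X A)" "?nA \<le> card I + ?nX"
    and R: "\<And>B. B \<in> I \<Longrightarrow> R B \<in> path_components_of (subtopology X A) - I"
      "\<And>B. B \<in> I \<Longrightarrow> \<exists>b\<in>B. \<exists>b'\<in>R B. path_component_of X b b'"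
    using obtain_redundant_path_components_of_subtopology[OF assms] by blast
  have "enat (?nA - ?nX) \<le> enat (card I)"
    using I(2) by simp
  also have "\<dots> \<le> group_rank (relative_homology_group 1 X A)"
    using finite_subset[OF I(1) assms(2)] I(1) R by (rule card_redundant_path_components_le_rank_homology_1)
  finally have H1: "enat (?nA - ?nX) \<le> group_rank (relative_homology_group 1 X A)" .
  have "enat (nat \<bar>int ?nA - int ?nX\<bar>) = enat (?nX - ?nA) + enat (?nA - ?nX)"
    by simp
  also have "\<dots> \<le> group_rank (relative_homology_group 0 X A) + group_rank (relative_homology_group 1 X A)"
    using H0 H1 by (rule add_mono)
  also have "\<dots> \<le> total_rel_hrank X A"
    by (rule group_rank_0_plus_1_le_total_rel_hrank)
  finally show ?thesis .
qed

definition finite_Union_closed_convex :: "'a::real_normed_vector set \<Rightarrow> bool" where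
  "finite_Union_closed_convex S \<longleftrightarrow> (\<exists>\<P>. finite \<P> \<and> (\<forall>Q\<in>\<P>. closed Q \<and> convex Q) \<and> S = \<Union>\<P>)"

lemma path_component_Union_convex:
  fixes \<P> :: "'a::real_normed_vector set set"
  assumes "\<And>Q. Q \<in> \<P> \<Longrightarrow> convex Q"
  shows "path_component_set (\<Union>\<P>) x = \<Union>{Q \<in> \<P>. Q \<inter> path_component_set (\<Union>\<P>) x \<noteq> {}}"
proof
  show "path_component_set (\<Union>\<P>) x \<subseteq> \<Union>{Q \<in> \<P>. Q \<inter> path_component_set (\<Union>\<P>) x \<noteq> {}}"
    using path_component_subset by fastforce
  show "\<Union>{Q \<in> \<P>. Q \<inter> path_component_set (\<Union>\<P>) x \<noteq> {}} \<subseteq> path_component_set (\<Union>\<P>) x"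
  proof -
    have "Q \<subseteq> path_component_set (\<Union>\<P>) x"
      if Q: "Q \<in> \<P>" "y \<in> Q" "y \<in> path_component_set (\<Union>\<P>) x" for Q y
    proof -
      have "Q \<subseteq> path_component_set (\<Union>\<P>) y"
        using Q convex_imp_path_connected[OF assms[OF Q(1)]]
        by (intro path_component_maximal) auto
      then show ?thesis
        using Q path_component_eq by blast
    qed
    then show ?thesis by blast
  qed
qed

lemma connected_component_eq_path_component_Union_closed_convex:
  fixes \<P> :: "'a::real_normed_vector set set"
  assumes "finite \<P>" "\<And>Q. Q \<in> \<P> \<Longrightarrow> closed Q \<and> convex Q"
  shows "connected_component_set (\<Union>\<P>) x = path_component_set (\<Union>\<P>) x"
proof (rule antisym[OF _ path_component_subset_connected_component])
  let ?P = "path_component_set (\<Union>\<P>) x" and ?C = "connected_component_set (\<Union>\<P>) x"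
  define N where "N = \<Union>{Q \<in> \<P>. Q \<inter> ?P = {}}"
  have P_eq: "?P = \<Union>{Q \<in> \<P>. Q \<inter> ?P \<noteq> {}}"
    using assms(2) by (intro path_component_Union_convex) blast
  have "closed ?P"
    using assms by (subst P_eq) (intro closed_Union; auto)
  moreover have "closed N"
    unfolding N_def using assms by (intro closed_Union; auto)
  moreover have "?C \<subseteq> ?P \<union> N"
  proof
    fix z assume "z \<in> ?C"
    then obtain Q where "Q \<in> \<P>" "z \<in> Q"
      using connected_component_subset by blast
    then show "z \<in> ?P \<union> N"
      using P_eq by (cases "Q \<inter> ?P = {}") (auto simp: N_def)
  qed
  moreover have "N \<inter> ?P = {}"
    by (auto simp: N_def)
  ultimately have "?C \<subseteq> ?P \<or> ?C \<inter> ?P = {}"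
    using connected_closed[of ?C] by blast
  moreover have "x \<in> ?C \<inter> ?P" if "?C \<noteq> {}"
  proof -
    have "x \<in> \<Union>\<P>"
      using that connected_component_eq_empty by blast
    then show ?thesis
      by (simp add: path_component_refl)
  qed
  ultimately show "?C \<subseteq> ?P"
    by blast
qed

lemma path_components_of_top_of_set:
  "path_components_of (top_of_set S) = path_component_set S ` S"
proof -
  have "path_component_of (top_of_set S) x = path_component S x" for x
    by (rule ext) simp
  then show ?thesis
    by (simp add: path_components_of_def)
qed

lemma components_eq_path_components_of_finite_Union_closed_convex:
  assumes "finite_Union_closed_convex S"
  shows "components S = path_components_of (top_of_set S)"
proof -
  obtain \<P> where "finite \<P>" "\<And>Q. Q \<in> \<P> \<Longrightarrow> closed Q \<and> convex Q" "S = \<Union>\<P>"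
    using assms unfolding finite_Union_closed_convex_def by blast
  then have "connected_component_set S x = path_component_set S x" for x
    by (simp add: connected_component_eq_path_component_Union_closed_convex)
  then show ?thesis
    unfolding components_def path_components_of_top_of_set by simp
qed

lemma finite_path_components_of_finite_Union_closed_convex:
  assumes "finite_Union_closed_convex S"
  shows "finite (path_components_of (top_of_set S))"
proof -
  obtain \<P> where \<P>: "finite \<P>" "\<And>Q. Q \<in> \<P> \<Longrightarrow> closed Q \<and> convex Q" and S: "S = \<Union>\<P>"
    using assms unfolding finite_Union_closed_convex_def by blast
  have "path_component_set S ` S \<subseteq> (\<lambda>Q. path_component_set S (SOME q. q \<in> Q)) ` \<P>"
  proof clarify
    fix x assume "x \<in> S"
    then obtain Q where Q: "Q \<in> \<P>" "x \<in> Q"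
      using S by blast
    then have "Q \<subseteq> path_component_set S x"
      using \<P>(2)[OF Q(1)] S by (intro path_component_maximal convex_imp_path_connected) auto
    then have "path_component_set S (SOME q. q \<in> Q) = path_component_set S x"
      using Q(2) by (metis path_component_eq path_component_sym someI subsetD mem_Collect_eq)
    then show "path_component_set S x \<in> (\<lambda>Q. path_component_set S (SOME q. q \<in> Q)) ` \<P>"
      using Q(1) by (intro image_eqI) auto
  qed
  then show ?thesis
    unfolding path_components_of_top_of_set using \<P>(1) finite_subset by blast
qed

lemma finite_Union_closed_convex_sublevel:
  fixes F :: "'a::real_inner \<Rightarrow> real"
  assumes "finite \<C>" "\<And>C. C \<in> \<C> \<Longrightarrow> closed C \<and> convex C" "\<Union>\<C> = UNIV"
    and "\<And>C. C \<in> \<C> \<Longrightarrow> \<exists>a b. \<forall>x\<in>C. F x = a \<bullet> x + b"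
  shows "finite_Union_closed_convex (sublevel F t)"
proof -
  let ?\<P> = "(\<lambda>C. C \<inter> sublevel F t) ` \<C>"
  have "closed Q \<and> convex Q" if "Q \<in> ?\<P>" for Q
  proof -
    obtain C a b where C: "C \<in> \<C>" "Q = C \<inter> sublevel F t" and "\<forall>x\<in>C. F x = a \<bullet> x + b"
      using \<open>Q \<in> ?\<P>\<close> assms(4) by blast
    then have "Q = C \<inter> {x. a \<bullet> x \<le> t - b}"
      by (auto simp: sublevel_def)
    then show ?thesis
      using assms(2)[OF C(1)] by (simp add: closed_Int closed_halfspace_le convex_Int convex_halfspace_le)
  qed
  moreover have "sublevel F t = \<Union>?\<P>"
    using assms(3) by blast
  moreover have "finite ?\<P>"
    using assms(1) by simp
  ultimately show ?thesis
    unfolding finite_Union_closed_convex_def by (intro exI[where x = ?\<P>]) blast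
qed

lemma abs_card_components_diff_le_total_rel_hrank:
  assumes "finite_Union_closed_convex U" "finite_Union_closed_convex A" "A \<subseteq> U"
  shows "enat (nat \<bar>int (card (components A)) - int (card (components U))\<bar>)
         \<le> total_rel_hrank (top_of_set U) A"
proof -
  have "subtopology (top_of_set U) A = top_of_set A"
    using assms(3) by (simp add: subtopology_subtopology Int_absorb1)
  then show ?thesis
    using abs_card_path_components_diff_le_total_rel_hrank[of "top_of_set U" A]
    by (simp add: assms components_eq_path_components_of_finite_Union_closed_convex
        finite_path_components_of_finite_Union_closed_convex)
qed

lemma superlevel_eq_sublevel_uminus: "superlevel F t = sublevel (\<lambda>x. - F x) (- t)"
  by (auto simp: sublevel_def superlevel_def)

lemma PL_wrt_uminus:
  assumes "PL_wrt F \<C>"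
  shows "PL_wrt (\<lambda>x. - F x) \<C>"
proof -
  have "\<exists>a b. \<forall>x\<in>C. - F x = a \<bullet> x + b" if affine: "\<exists>a b. \<forall>x\<in>C. F x = a \<bullet> x + b" for C
  proof -
    obtain a b where "\<forall>x\<in>C. F x = a \<bullet> x + b"
      using affine by blast
    then have "\<forall>x\<in>C. - F x = (- a) \<bullet> x + (- b)"
      by simp
    then show ?thesis by blast
  qed
  moreover have "continuous_on UNIV (\<lambda>x. - F x)"
    using assms by (simp add: PL_wrt_def continuous_on_minus)
  ultimately show ?thesis
    using assms unfolding PL_wrt_def by blast
qed

lemma finite_Union_closed_convex_sublevel_PL:
  assumes "PL_wrt F \<C>"
  shows "finite_Union_closed_convex (sublevel F t)"
proof (rule finite_Union_closed_convex_sublevel)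
  have complex: "polyhedral_complex \<C>"
    using assms by (simp add: PL_wrt_def)
  then show "finite \<C>"
    by (simp add: polyhedral_complex_def)
  show "closed C \<and> convex C" if "C \<in> \<C>" for C
    using complex that polyhedron_imp_closed polyhedron_imp_convex
    unfolding polyhedral_complex_def by blast
  show "\<Union>\<C> = UNIV" "\<And>C. C \<in> \<C> \<Longrightarrow> \<exists>a b. \<forall>x\<in>C. F x = a \<bullet> x + b"
    using assms unfolding PL_wrt_def by blast+
qed

theorem theorem1p5:
  fixes F :: "'a::euclidean_space \<Rightarrow> real" and \<C> :: "'a set set" and M :: real
  assumes "PL_wrt F \<C>"
    and "M > 0"
    and "\<forall>C\<in>\<C>. flat_cell F C \<longrightarrow> F ` C \<subseteq> {-M..M}"
  shows "enat (nat \<bar>int (card (components (sublevel F (-M)))) - int (card (components (sublevel F M)))\<bar>)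
           \<le> total_rel_hrank (subtopology euclidean (sublevel F M)) (sublevel F (-M))
         \<and> enat (nat \<bar>int (card (components (superlevel F M))) - int (card (components (superlevel F (-M))))\<bar>)
           \<le> total_rel_hrank (subtopology euclidean (superlevel F (-M))) (superlevel F M)"
proof -
  have sub: "finite_Union_closed_convex (sublevel F t)" for t
    using assms(1) by (rule finite_Union_closed_convex_sublevel_PL)
  have super: "finite_Union_closed_convex (superlevel F t)" for t
    unfolding superlevel_eq_sublevel_uminus
    using PL_wrt_uminus[OF assms(1)] by (rule finite_Union_closed_convex_sublevel_PL)
  have "sublevel F (-M) \<subseteq> sublevel F M" "superlevel F M \<subseteq> superlevel F (-M)"
    using assms(2) by (auto simp: sublevel_def superlevel_def)
  then show ?thesis
    by (simp add: abs_card_components_diff_le_total_rel_hrank sub super)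
qed

end
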